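(* Let $n\ge1$, $0\le k\le n$, let $T_1,\dots,T_n$ be i.i.d. with continuous distribution function $F$, with order statistics $T_{(1)}\le\dots\le T_{(n)}$ and conventions $T_{(0)}=-\infty$, $T_{(n+1)}=+\infty$, $F(-\infty)=0$, $F(+\infty)=1$. Define $y_0=1-F(T_{(k)})$, $z_0=1-F(T_{(k+1)})$, $y_1=F(T_{(k+1)})$, $z_1=F(T_{(k)})$. Then for every $\varepsilon>0$: $$P\Big(y_0>\tfrac{n-k+1}{n+1}+\varepsilon\Big)\le e^{-2n(\varepsilon+\frac{k}{n(n+1)})^2},\qquad P\Big(z_0<\tfrac{n-k}{n+1}-\varepsilon\Big)\le e^{-2n(\varepsilon+\frac{n-k}{n(n+1)})^2},$$ $$P\Big(y_1>\tfrac{k+1}{n+1}+\varepsilon\Big)\le e^{-2n(\varepsilon+\frac{n-k}{n(n+1)})^2},\qquad P\Big(z_1<\tfrac{k}{n+1}-\varepsilon\Big)\le e^{-2n(\varepsilon+\frac{k}{n(n+1)})^2}.$$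
   Context: In the paper these quantities bound the false positive rate (using the class-0 sample, $y_0,z_0$) and false negative rate (using the class-1 sample, $y_1,z_1$) of the THORS threshold lying between consecutive order statistics $T_{(k)}$ and $T_{(k+1)}$. *)

theory Defs
  imports "HOL-Probability.Probability"
begin

definition order_stat :: "(nat \<Rightarrow> 'a \<Rightarrow> real) \<Rightarrow> nat \<Rightarrow> nat \<Rightarrow> 'a \<Rightarrow> real" where
  "order_stat T n j \<omega> = sort (map (\<lambda>i. T i \<omega>) [0..<n]) ! (j - 1)"

text \<open>F applied to the j-th order statistic, for 0 \<le> j \<le> n+1, with the conventions
  T_(0) = -\<infinity>, T_(n+1) = +\<infinity>, F(-\<infinity>) = 0, F(+\<infinity>) = 1.\<close>
definition F_ostat :: "(real \<Rightarrow> real) \<Rightarrow> (nat \<Rightarrow> 'a \<Rightarrow> real) \<Rightarrow> nat \<Rightarrow> nat \<Rightarrow> 'a \<Rightarrow> real" where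
  "F_ostat F T n j \<omega> = (if j = 0 then 0 else if n < j then 1 else F (order_stat T n j \<omega>))"

end

theory Submission
  imports Defs
begin

text \<open>For a continuous distribution function F and 0 < t < 1 there is a point a with F a = t, so
  the event F(T_(j)) < t forces at least j of the T_i into (-\<infinity>, a]. The number of such T_i is a
  sum of n independent Bernoulli variables of mean t, and Hoeffding's inequality bounds the
  probability that it reaches j \<ge> n t by exp(-2n(j/n - t)^2). The upper deviation of
  F(T_(j+1)) is handled in the same way with the complementary half-lines (b, \<infinity>). The four
  bounds of the theorem are these two estimates, two of them read through y \<mapsto> 1 - y.\<close>

lemma length_filter_le_ge_of_sorted:
  fixes ys :: "real list"
  assumes "sorted ys" "1 \<le> j" "j \<le> length ys" "ys ! (j - 1) \<le> a"
  shows "j \<le> length (filter (\<lambda>x. x \<le> a) ys)"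
proof -
  have "\<forall>x\<in>set (take j ys). x \<le> a"
  proof
    fix x assume "x \<in> set (take j ys)"
    then obtain m where "m < length (take j ys)" "x = take j ys ! m"
      by (metis in_set_conv_nth)
    then have "x = ys ! m" "m \<le> j - 1" "j - 1 < length ys"
      using assms(2,3) by auto
    then have "x \<le> ys ! (j - 1)"
      using assms(1) by (simp add: sorted_nth_mono)
    then show "x \<le> a" using assms(4) by simp
  qed
  then have "filter (\<lambda>x. x \<le> a) (take j ys) = take j ys" by simp
  moreover have "length (filter (\<lambda>x. x \<le> a) ys)
      = length (filter (\<lambda>x. x \<le> a) (take j ys)) + length (filter (\<lambda>x. x \<le> a) (drop j ys))"
    by (metis append_take_drop_id filter_append length_append)
  ultimately show ?thesis using assms(3) by simp
qed

lemma length_filter_greater_ge_of_sorted: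
  fixes ys :: "real list"
  assumes "sorted ys" "j < length ys" "a < ys ! j"
  shows "length ys - j \<le> length (filter (\<lambda>x. a < x) ys)"
proof -
  have "\<forall>x\<in>set (drop j ys). a < x"
  proof
    fix x assume "x \<in> set (drop j ys)"
    then obtain m where "m < length (drop j ys)" "x = drop j ys ! m"
      by (metis in_set_conv_nth)
    then have "x = ys ! (j + m)" "j + m < length ys" by auto
    then have "ys ! j \<le> x"
      using assms(1) by (simp add: sorted_nth_mono)
    then show "a < x" using assms(3) by simp
  qed
  then have "filter (\<lambda>x. a < x) (drop j ys) = drop j ys" by simp
  moreover have "length (filter (\<lambda>x. a < x) ys)
      = length (filter (\<lambda>x. a < x) (take j ys)) + length (filter (\<lambda>x. a < x) (drop j ys))"
    by (metis append_take_drop_id filter_append length_append)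
  ultimately show ?thesis by simp
qed

lemma sum_indicator_eq_length_filter_sort:
  "(\<Sum>i<n. indicator S (T i \<omega>) :: real)
     = real (length (filter (\<lambda>x. x \<in> S) (sort (map (\<lambda>i. T i \<omega>) [0..<n]))))"
proof -
  have "(\<Sum>i<n. indicator S (T i \<omega>) :: real)
      = real (length (filter (\<lambda>x. x \<in> S) (map (\<lambda>i. T i \<omega>) [0..<n])))"
    by (induction n) auto
  also have "length (filter (\<lambda>x. x \<in> S) (map (\<lambda>i. T i \<omega>) [0..<n]))
      = length (filter (\<lambda>x. x \<in> S) (sort (map (\<lambda>i. T i \<omega>) [0..<n])))"
    by (metis mset_filter mset_sort size_mset)
  finally show ?thesis .
qed

lemma order_stat_le_imp_count_ge:
  assumes "1 \<le> j" "j \<le> n" "order_stat T n j \<omega> \<le> a"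
  shows "real j \<le> (\<Sum>i<n. indicator {..a} (T i \<omega>))"
  using length_filter_le_ge_of_sorted[of "sort (map (\<lambda>i. T i \<omega>) [0..<n])" j a] assms
  by (simp add: sum_indicator_eq_length_filter_sort order_stat_def)

lemma order_stat_greater_imp_count_ge:
  assumes "j < n" "a < order_stat T n (j + 1) \<omega>"
  shows "real (n - j) \<le> (\<Sum>i<n. indicator {a<..} (T i \<omega>))"
  using length_filter_greater_ge_of_sorted[of "sort (map (\<lambda>i. T i \<omega>) [0..<n])" j a] assms
  by (simp add: sum_indicator_eq_length_filter_sort order_stat_def)

lemma (in real_distribution) continuous_cdf_attains:
  assumes cont: "continuous_on UNIV (cdf M)" and t: "0 < t" "t < 1"
  shows "\<exists>a. cdf M a = t"
proof -
  obtain x1 where x1: "cdf M x1 < t"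
    using order_tendstoD(2)[OF cdf_lim_at_bot t(1)] by (auto simp: eventually_at_bot_linorder)
  obtain x2 where x2: "t < cdf M x2"
    using order_tendstoD(1)[OF cdf_lim_at_top_prob t(2)] by (auto simp: eventually_at_top_linorder)
  have "x1 \<le> x2"
    using x1 x2 cdf_nondecreasing by (meson le_less_trans linear not_less)
  then show ?thesis
    using IVT'[of "cdf M" x1 t x2] x1 x2 continuous_on_subset[OF cont] by auto
qed

lemma (in prob_space) prob_indicator_count_ge:
  fixes T :: "nat \<Rightarrow> 'a \<Rightarrow> real" and c p :: real
  assumes indep_T: "indep_vars (\<lambda>_. borel) T {..<n}" and "n \<ge> 1"
    and S: "S \<in> sets borel"
    and p: "\<And>i. i < n \<Longrightarrow> prob {\<omega> \<in> space M. T i \<omega> \<in> S} \<le> p"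
    and "p \<le> c / real n"
  shows "prob {\<omega> \<in> space M. c \<le> (\<Sum>i<n. indicator S (T i \<omega>))} \<le> exp (- 2 * real n * (c / real n - p)\<^sup>2)"
proof -
  define X where "X = (\<lambda>i \<omega>. indicator S (T i \<omega>) :: real)"
  define \<mu> where "\<mu> = (\<Sum>i<n. expectation (X i))"
  interpret Hoeffding_ineq M "{..<n}" X "\<lambda>_. 0" "\<lambda>_. 1" \<mu>
  proof unfold_locales
    show "indep_vars (\<lambda>_. borel) X {..<n}"
      unfolding X_def by (rule indep_vars_compose2[OF indep_T]) (use S in auto)
  qed (auto simp: X_def \<mu>_def)
  have "expectation (X i) \<le> p" if i: "i < n" for i
  proof -
    have "random_variable borel (T i)"
      using indep_T i unfolding indep_vars_def by blast
    then have "{\<omega> \<in> space M. T i \<omega> \<in> S} \<in> events"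
      using S by measurable
    moreover have "expectation (X i) = expectation (indicator {\<omega> \<in> space M. T i \<omega> \<in> S})"
      by (rule Bochner_Integration.integral_cong) (auto simp: X_def indicator_def)
    ultimately show ?thesis
      using p[OF i] by simp
  qed
  then have \<mu>: "\<mu> \<le> n * p"
    unfolding \<mu>_def using sum_mono[of "{..<n}" "\<lambda>i. expectation (X i)" "\<lambda>_. p"] by simp
  have "n * p \<le> c"
    using assms(2,5) by (simp add: field_simps)
  then have "prob {\<omega> \<in> space M. \<mu> + (c - \<mu>) \<le> (\<Sum>i<n. X i \<omega>)} \<le> exp (- 2 * (c - \<mu>)\<^sup>2 / n)"
    using Hoeffding_ineq_ge[of "c - \<mu>"] \<mu> assms(2) by simp
  also have "\<dots> \<le> exp (- 2 * (c - n * p)\<^sup>2 / n)"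
  proof -
    have "(c - n * p)\<^sup>2 \<le> (c - \<mu>)\<^sup>2"
      using \<mu> \<open>n * p \<le> c\<close> by (intro power_mono) auto
    then show ?thesis by (simp add: divide_right_mono)
  qed
  also have "- 2 * (c - n * p)\<^sup>2 / n = - 2 * n * (c / n - p)\<^sup>2"
  proof -
    have "c - n * p = n * (c / n - p)"
      using assms(2) by (simp add: field_simps)
    then show ?thesis
      using assms(2) by (simp add: power_mult_distrib power2_eq_square)
  qed
  finally show ?thesis by (simp add: X_def)
qed

lemma divide_diff_divide_Suc_eq:
  fixes n k :: nat
  assumes "n \<ge> 1"
  shows "real k / real n - real k / real (n + 1) = real k / (real n * real (n + 1))"
  using assms by (simp add: field_simps)

lemma Suc_divide_Suc_diff_divide_eq:
  fixes n k :: nat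
  assumes "n \<ge> 1" "k \<le> n"
  shows "real (k + 1) / real (n + 1) - real k / real n = real (n - k) / (real n * real (n + 1))"
  using assms by (simp add: field_simps)

locale continuous_iid_sample = prob_space M for M :: "'a measure" +
  fixes T :: "nat \<Rightarrow> 'a \<Rightarrow> real" and F :: "real \<Rightarrow> real" and n :: nat
  assumes n_pos: "n \<ge> 1"
    and indep: "indep_vars (\<lambda>_. borel) T {..<n}"
    and cdf: "\<And>i x. i < n \<Longrightarrow> prob {\<omega> \<in> space M. T i \<omega> \<le> x} = F x"
    and cont: "continuous_on UNIV F"
begin

lemma random_variable [measurable]: "i < n \<Longrightarrow> random_variable borel (T i)"
  using indep unfolding indep_vars_def by blast

lemma cdf_distr: "cdf (distr M borel (T 0)) = F"
proof
  fix x
  have "cdf (distr M borel (T 0)) x = prob (T 0 -` {..x} \<inter> space M)"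
    unfolding cdf_def using n_pos by (subst measure_distr) auto
  also have "T 0 -` {..x} \<inter> space M = {\<omega> \<in> space M. T 0 \<omega> \<le> x}" by auto
  finally show "cdf (distr M borel (T 0)) x = F x"
    using cdf[of 0] n_pos by simp
qed

sublocale D: real_distribution "distr M borel (T 0)"
  using n_pos by simp

lemma F_mono: "x \<le> y \<Longrightarrow> F x \<le> F y"
  using D.cdf_nondecreasing by (simp add: cdf_distr)

lemma F_less_imp_less: "F x < F y \<Longrightarrow> x < y"
  using F_mono by (meson not_less)

lemma F_ostat_nonneg: "0 \<le> F_ostat F T n j \<omega>"
  using D.cdf_nonneg by (simp add: F_ostat_def cdf_distr)

lemma F_ostat_le_1: "F_ostat F T n j \<omega> \<le> 1"
  using D.cdf_bounded_prob by (simp add: F_ostat_def cdf_distr)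

lemma F_attains: "0 < t \<Longrightarrow> t < 1 \<Longrightarrow> \<exists>a. F a = t"
  using D.continuous_cdf_attains cont by (simp add: cdf_distr)

lemma prob_F_ostat_less:
  assumes "j \<le> n" "t \<le> real j / real n"
  shows "prob {\<omega> \<in> space M. F_ostat F T n j \<omega> < t} \<le> exp (- 2 * real n * (real j / real n - t)\<^sup>2)"
proof -
  consider "t \<le> 0" | "1 \<le> t" | "0 < t" "t < 1" by linarith
  then show ?thesis
  proof cases
    case 1
    then have "\<not> F_ostat F T n j \<omega> < t" for \<omega>
      using F_ostat_nonneg[of j \<omega>] by linarith
    then show ?thesis by simp
  next
    case 2
    have "real j / real n \<le> 1" using assms(1) by (simp add: divide_le_eq)
    then have "t = real j / real n" using 2 assms(2) by linarith
    then show ?thesis by simp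
  next
    case 3
    obtain a where a: "F a = t" using F_attains 3 by blast
    have "0 < real j / real n" using 3 assms(2) by linarith
    then have "j \<ge> 1" by (cases j) auto
    have "{\<omega> \<in> space M. F_ostat F T n j \<omega> < t}
        \<subseteq> {\<omega> \<in> space M. real j \<le> (\<Sum>i<n. indicator {..a} (T i \<omega>))}"
    proof safe
      fix \<omega> assume "F_ostat F T n j \<omega> < t"
      then have "F (order_stat T n j \<omega>) < F a"
        using \<open>j \<ge> 1\<close> assms(1) a by (simp add: F_ostat_def)
      then have "order_stat T n j \<omega> \<le> a"
        by (rule less_imp_le[OF F_less_imp_less])
      then show "real j \<le> (\<Sum>i<n. indicator {..a} (T i \<omega>))"
        by (rule order_stat_le_imp_count_ge[OF \<open>j \<ge> 1\<close> assms(1)])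
    qed
    then have "prob {\<omega> \<in> space M. F_ostat F T n j \<omega> < t}
        \<le> prob {\<omega> \<in> space M. real j \<le> (\<Sum>i<n. indicator {..a} (T i \<omega>))}"
      by (rule finite_measure_mono) measurable
    also have "\<dots> \<le> exp (- 2 * real n * (real j / real n - t)\<^sup>2)"
      using cdf a by (intro prob_indicator_count_ge[OF indep n_pos]) (simp_all add: assms(2))
    finally show ?thesis .
  qed
qed

lemma prob_F_ostat_greater:
  assumes "j \<le> n" "real j / real n \<le> s"
  shows "prob {\<omega> \<in> space M. s < F_ostat F T n (j + 1) \<omega>} \<le> exp (- 2 * real n * (s - real j / real n)\<^sup>2)"
proof -
  consider "1 \<le> s" | "s \<le> 0" | "0 < s" "s < 1" by linarith
  then show ?thesis
  proof cases
    case 1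
    then have "\<not> s < F_ostat F T n (j + 1) \<omega>" for \<omega>
      using F_ostat_le_1[of "j + 1" \<omega>] by linarith
    then show ?thesis by simp
  next
    case 2
    moreover have "0 \<le> real j / real n" by simp
    ultimately have "s = real j / real n" using assms(2) by linarith
    then show ?thesis by simp
  next
    case 3
    obtain b where b: "F b = s" using F_attains 3 by blast
    have "j < n"
      using 3 assms n_pos by (cases "j = n") auto
    have "{\<omega> \<in> space M. s < F_ostat F T n (j + 1) \<omega>}
        \<subseteq> {\<omega> \<in> space M. real (n - j) \<le> (\<Sum>i<n. indicator {b<..} (T i \<omega>))}"
    proof safe
      fix \<omega> assume "s < F_ostat F T n (j + 1) \<omega>"
      then have "F b < F (order_stat T n (j + 1) \<omega>)"
        using \<open>j < n\<close> b by (simp add: F_ostat_def)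
      then have "b < order_stat T n (j + 1) \<omega>"
        by (rule F_less_imp_less)
      then show "real (n - j) \<le> (\<Sum>i<n. indicator {b<..} (T i \<omega>))"
        by (rule order_stat_greater_imp_count_ge[OF \<open>j < n\<close>])
    qed
    then have "prob {\<omega> \<in> space M. s < F_ostat F T n (j + 1) \<omega>}
        \<le> prob {\<omega> \<in> space M. real (n - j) \<le> (\<Sum>i<n. indicator {b<..} (T i \<omega>))}"
      by (rule finite_measure_mono) measurable
    also have "\<dots> \<le> exp (- 2 * real n * (real (n - j) / real n - (1 - s))\<^sup>2)"
    proof (intro prob_indicator_count_ge[OF indep n_pos])
      fix i assume i: "i < n"
      have "space M - {\<omega> \<in> space M. T i \<omega> \<le> b} = {\<omega> \<in> space M. T i \<omega> \<in> {b<..}}"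
        by auto
      then show "prob {\<omega> \<in> space M. T i \<omega> \<in> {b<..}} \<le> 1 - s"
        using prob_compl[of "{\<omega> \<in> space M. T i \<omega> \<le> b}"] cdf[OF i] b i by simp
    next
      show "1 - s \<le> real (n - j) / real n"
        using assms(2) n_pos \<open>j < n\<close> by (simp add: diff_divide_distrib)
    qed simp
    also have "real (n - j) / n - (1 - s) = s - real j / real n"
      using n_pos \<open>j < n\<close> by (simp add: diff_divide_distrib)
    finally show ?thesis .
  qed
qed

end

theorem mainTheorem5:
  fixes M :: "'a measure" and T :: "nat \<Rightarrow> 'a \<Rightarrow> real" and F :: "real \<Rightarrow> real"
    and n k :: nat and \<epsilon> :: real
  assumes "prob_space M"
    and "n \<ge> 1" and "k \<le> n"
    and meas: "\<And>i. i < n \<Longrightarrow> T i \<in> borel_measurable M"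
    and indep: "prob_space.indep_vars M (\<lambda>_. borel) T {..<n}"
    and cdf: "\<And>i x. i < n \<Longrightarrow> measure M {\<omega> \<in> space M. T i \<omega> \<le> x} = F x"
    and cont: "continuous_on UNIV F"
    and "\<epsilon> > 0"
  shows
    "measure M {\<omega> \<in> space M. 1 - F_ostat F T n k \<omega> > real (n - k + 1) / real (n + 1) + \<epsilon>}
       \<le> exp (- 2 * real n * (\<epsilon> + real k / (real n * real (n + 1)))\<^sup>2) \<and>
     measure M {\<omega> \<in> space M. 1 - F_ostat F T n (k + 1) \<omega> < real (n - k) / real (n + 1) - \<epsilon>}
       \<le> exp (- 2 * real n * (\<epsilon> + real (n - k) / (real n * real (n + 1)))\<^sup>2) \<and>
     measure M {\<omega> \<in> space M. F_ostat F T n (k + 1) \<omega> > real (k + 1) / real (n + 1) + \<epsilon>}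
       \<le> exp (- 2 * real n * (\<epsilon> + real (n - k) / (real n * real (n + 1)))\<^sup>2) \<and>
     measure M {\<omega> \<in> space M. F_ostat F T n k \<omega> < real k / real (n + 1) - \<epsilon>}
       \<le> exp (- 2 * real n * (\<epsilon> + real k / (real n * real (n + 1)))\<^sup>2)"
proof -
  interpret prob_space M by fact
  interpret continuous_iid_sample M T F n
    using assms by unfold_locales simp_all
  define t where "t = real k / real (n + 1) - \<epsilon>"
  define s where "s = real (k + 1) / real (n + 1) + \<epsilon>"
  have t_gap: "real k / real n - t = \<epsilon> + real k / (real n * real (n + 1))"
    and s_gap: "s - real k / real n = \<epsilon> + real (n - k) / (real n * real (n + 1))"
    using divide_diff_divide_Suc_eq[OF \<open>n \<ge> 1\<close>, of k]
      Suc_divide_Suc_diff_divide_eq[OF \<open>n \<ge> 1\<close> \<open>k \<le> n\<close>]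
    unfolding t_def s_def by simp_all
  have "0 \<le> real k / (real n * real (n + 1))" "0 \<le> real (n - k) / (real n * real (n + 1))"
    by simp_all
  then have "t \<le> real k / real n" "real k / real n \<le> s"
    using t_gap s_gap \<open>\<epsilon> > 0\<close> by linarith+
  have lower: "prob {\<omega> \<in> space M. F_ostat F T n k \<omega> < t}
      \<le> exp (- 2 * real n * (\<epsilon> + real k / (real n * real (n + 1)))\<^sup>2)"
    using prob_F_ostat_less[OF \<open>k \<le> n\<close> \<open>t \<le> real k / real n\<close>] unfolding t_gap .
  have upper: "prob {\<omega> \<in> space M. s < F_ostat F T n (k + 1) \<omega>}
      \<le> exp (- 2 * real n * (\<epsilon> + real (n - k) / (real n * real (n + 1)))\<^sup>2)"
    using prob_F_ostat_greater[OF \<open>k \<le> n\<close> \<open>real k / real n \<le> s\<close>] unfolding s_gap .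
  have "real (n - k + 1) / real (n + 1) + \<epsilon> = 1 - t" "real (n - k) / real (n + 1) - \<epsilon> = 1 - s"
    unfolding t_def s_def using \<open>k \<le> n\<close> by (simp_all add: field_simps)
  then have "{\<omega> \<in> space M. 1 - F_ostat F T n k \<omega> > real (n - k + 1) / real (n + 1) + \<epsilon>}
      = {\<omega> \<in> space M. F_ostat F T n k \<omega> < t}"
    "{\<omega> \<in> space M. 1 - F_ostat F T n (k + 1) \<omega> < real (n - k) / real (n + 1) - \<epsilon>}
      = {\<omega> \<in> space M. s < F_ostat F T n (k + 1) \<omega>}"
    by auto
  then show ?thesis
    unfolding t_def[symmetric] s_def[symmetric] using lower upper by simp
qed

end
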